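(* Let $a,b,c\in[0,1]$, each different from $\frac12$, and define $f=f_{a,b,c}:[0,1]\to[0,1]$ by $$f(x)=\begin{cases}(1-2a)x^2+2ax, & x\in[0,\frac13],\\ (1-2b)x^2+2bx, & x\in(\frac13,\frac23),\\ (1-2c)x^2+2cx, & x\in[\frac23,1].\end{cases}$$ Let $f^n$ denote the $n$-fold composition and $x^{(n)}=f^n(x^{(0)})$. Then: 1. The set of fixed points of $f$ is $\{0,1\}$. 2. If $a,b,c<\frac12$, then $\lim_{n\to\infty}x^{(n)}=0$ for all $x^{(0)}\in[0,1)$. 3. If $a<\frac12$, $b<\frac12$, $c>\frac12$, then $\lim_{n\to\infty}x^{(n)}=0$ if $x^{(0)}\in[0,\frac23)$ and $\lim_{n\to\infty}x^{(n)}=1$ if $x^{(0)}\in[\frac23,1]$. 4. If $a<\frac12$, $b>\frac12$, $c<\frac12$, then $\lim_{n\to\infty}x^{(n)}=0$ for all $x^{(0)}\in[0,\frac13]$. 5. If $a<\frac12$, $b>\frac12$, $c<\frac12$, let $A_1=[0,\frac13]$, $A_2=(\frac13,\frac49(1+c))\cup(\frac49(1+b),1)$, $A_3=[\frac49(1+c),\frac49(1+b)]$. Then (i) $\lim_{n\to\infty}x^{(n)}=0$ for every $x^{(0)}\in A_1$; (ii) for every $x_0\in A_2$ there exists $n_0=n_0(x_0)\in\mathbb N$ such that $f^n(x_0)\in A_3$ for all $n>n_0$; (iii) $f(A_3)\subset A_3$. 6. If $a<\frac12$, $b>\frac12$, $c>\frac12$, then $\lim_{n\to\infty}x^{(n)}=0$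 if $x^{(0)}\in[0,\frac13]$ and $\lim_{n\to\infty}x^{(n)}=1$ if $x^{(0)}\in(\frac13,1]$. 7. If $a>\frac12$, $b<\frac12$, $c<\frac12$, let $B_1=(0,\frac19(1+4b))\cup(\frac19(1+4a),1)$ and $B_2=[\frac19(1+4b),\frac19(1+4a)]$. Then (i) for every $x_0\in B_1$ there exists $n_0=n_0(x_0)\in\mathbb N$ such that $f^n(x_0)\in B_2$ for all $n>n_0$; (ii) $f(B_2)\subset B_2$. 8. If $a>\frac12$, $b<\frac12$, $c>\frac12$, let $C_1=(0,\frac19(1+4b))\cup(\frac19(1+4a),\frac23)$, $C_2=[\frac19(1+4b),\frac19(1+4a)]$, $C_3=[\frac23,1]$. Then (i) for every $x_0\in C_1$ there exists $n_0=n_0(x_0)\in\mathbb N$ such that $f^n(x_0)\in C_2$ for all $n>n_0$; (ii) $f(C_2)\subset C_2$; (iii) $\lim_{n\to\infty}x^{(n)}=1$ for every $x^{(0)}\in C_3$. 9. If $a,b,c>\frac12$, then $\lim_{n\to\infty}x^{(n)}=1$ for all $x^{(0)}\in(0,1]$.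
   Context: Here all parameters lie in $[0,1]$, so e.g. "$a<\frac12$" means $0\le a<\frac12$ and "$a>\frac12$" means $\frac12<a\le1$. The map is the reduction to $[0,1]$ (via $y=1-x$) of the quadratic stochastic operator $x'=x^2+2p(x)xy$, $y'=2(1-p(x))xy+y^2$ with $p(x)=a$ for $x\le\frac13$, $b$ for $\frac13<x<\frac23$, $c$ for $x\ge\frac23$. *)

theory Defs
  imports "HOL-Analysis.Analysis"
begin

definition fabc :: "real \<Rightarrow> real \<Rightarrow> real \<Rightarrow> real \<Rightarrow> real" where
  "fabc a b c x =
     (if x \<le> 1/3 then (1 - 2*a) * x^2 + 2*a*x
      else if x < 2/3 then (1 - 2*b) * x^2 + 2*b*x
      else (1 - 2*c) * x^2 + 2*c*x)"

end

theory Submission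
  imports Defs
begin

text \<open>Each branch of f has the form x \<mapsto> x + (2p - 1) x (1 - x). Where p < 1/2 on all of
  [0, x0], the orbit of x0 decreases and contracts geometrically to 0; the reflection
  x \<mapsto> 1 - x, which turns p into 1 - p, gives the dual statement for p > 1/2 and the point 1.
  If the branch left of a breakpoint t pushes up and the branch right of it pushes down, the
  interval between the images of t under the two branches is invariant, and an orbit outside it
  moves towards it by steps bounded away from 0, so it enters the interval after finitely many
  steps.\<close>

definition qso :: "real \<Rightarrow> real \<Rightarrow> real" where
  "qso p x = (1 - 2*p) * x^2 + 2*p*x"

lemma qso_eq: "qso p x = x + (2*p - 1) * x * (1 - x)"
  unfolding qso_def by (simp add: power2_eq_square algebra_simps)

lemma one_minus_qso: "1 - qso p x = qso (1 - p) (1 - x)"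
  unfolding qso_eq by (simp add: algebra_simps)

lemma qso_one_third [simp]: "qso p (1/3) = 1/9 * (1 + 4*p)"
  unfolding qso_def by (simp add: power2_eq_square field_simps)

lemma qso_two_thirds [simp]: "qso p (2/3) = 4/9 * (1 + p)"
  unfolding qso_def by (simp add: power2_eq_square field_simps)

lemma qso_nonneg:
  assumes "0 \<le> p" "0 \<le> x" "x \<le> 1"
  shows "0 \<le> qso p x"
proof -
  have "qso p x = x^2 + 2*p * (x * (1 - x))"
    unfolding qso_def by (simp add: power2_eq_square algebra_simps)
  then show ?thesis using assms by simp
qed

lemma qso_le_one:
  assumes "p \<le> 1" "0 \<le> x" "x \<le> 1"
  shows "qso p x \<le> 1"
  using qso_nonneg[of "1 - p" "1 - x"] assms by (simp add: one_minus_qso[symmetric])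

lemma qso_mono:
  assumes "0 \<le> p" "p \<le> 1" "0 \<le> x" "x \<le> y" "y \<le> 1"
  shows "qso p x \<le> qso p y"
proof -
  have diff: "qso p y - qso p x = (y - x) * ((1 - 2*p) * (x + y) + 2*p)"
    unfolding qso_def by (simp add: power2_eq_square algebra_simps)
  have "(1 - 2*p) * (x + y) + 2*p = (1 - p) * (x + y) + p * ((1 - x) + (1 - y))"
    by (simp add: algebra_simps)
  also have "\<dots> \<ge> 0" using assms by simp
  finally have "0 \<le> (1 - 2*p) * (x + y) + 2*p" .
  then have "0 \<le> qso p y - qso p x" unfolding diff using assms by simp
  then show ?thesis by simp
qed

lemma qso_ge_increment:
  assumes "1/2 \<le> q" "q \<le> p" "0 \<le> m" "m \<le> x" "0 \<le> k" "k \<le> 1 - x"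
  shows "x + (2*q - 1) * m * k \<le> qso p x"
proof -
  have "m * k \<le> x * (1 - x)" using assms by (intro mult_mono) auto
  then have "(2*q - 1) * (m * k) \<le> (2*p - 1) * (x * (1 - x))"
    using assms by (intro mult_mono) auto
  then show ?thesis unfolding qso_eq by (simp add: algebra_simps)
qed

lemma qso_le_decrement:
  assumes "p \<le> q" "q \<le> 1/2" "0 \<le> m" "m \<le> x" "0 \<le> k" "k \<le> 1 - x"
  shows "qso p x \<le> x - (1 - 2*q) * m * k"
proof -
  have "m * k \<le> x * (1 - x)" using assms by (intro mult_mono) auto
  then have "(1 - 2*q) * (m * k) \<le> (1 - 2*p) * (x * (1 - x))"
    using assms by (intro mult_mono) auto
  then show ?thesis unfolding qso_eq by (simp add: algebra_simps)
qed

lemma qso_ge_self: "1/2 \<le> p \<Longrightarrow> 0 \<le> x \<Longrightarrow> x \<le> 1 \<Longrightarrow> x \<le> qso p x"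
  using qso_ge_increment[of "1/2" p 0 x 0] by simp

lemma qso_le_self: "p \<le> 1/2 \<Longrightarrow> 0 \<le> x \<Longrightarrow> x \<le> 1 \<Longrightarrow> qso p x \<le> x"
  using qso_le_decrement[of p "1/2" 0 x 0] by simp

lemma orbit_tendsto_0_if_contracting:
  fixes f :: "real \<Rightarrow> real"
  assumes contracting: "\<And>x. 0 \<le> x \<Longrightarrow> x \<le> x0 \<Longrightarrow> 0 \<le> f x \<and> f x \<le> r * x"
    and r: "0 \<le> r" "r < 1" and "0 \<le> x0"
  shows "(\<lambda>n. (f ^^ n) x0) \<longlonglongrightarrow> 0"
proof -
  have bound: "0 \<le> (f ^^ n) x0 \<and> (f ^^ n) x0 \<le> r ^ n * x0" for n
  proof (induction n)
    case 0
    then show ?case using \<open>0 \<le> x0\<close> by simp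
  next
    case (Suc n)
    have "r ^ n * x0 \<le> x0"
      using r \<open>0 \<le> x0\<close> by (intro mult_left_le_one_le power_le_one) auto
    then have "0 \<le> f ((f ^^ n) x0) \<and> f ((f ^^ n) x0) \<le> r * (f ^^ n) x0"
      using Suc contracting[of "(f ^^ n) x0"] by linarith
    moreover have "r * (f ^^ n) x0 \<le> r * (r ^ n * x0)"
      using Suc r by (intro mult_left_mono) auto
    ultimately show ?case by simp
  qed
  have "(\<lambda>n. r ^ n * x0) \<longlonglongrightarrow> 0"
    using r by (intro tendsto_mult_left_zero LIMSEQ_power_zero) simp
  then show ?thesis
    by (rule Lim_null_comparison[rotated]) (use bound in auto)
qed

lemma funpow_reflect:
  fixes f :: "real \<Rightarrow> real"
  shows "((\<lambda>y. 1 - f (1 - y)) ^^ n) y = 1 - (f ^^ n) (1 - y)"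
  by (induction n) simp_all

lemma orbit_enters_invariant_set:
  fixes \<phi> :: "'a \<Rightarrow> real"
  assumes invariant: "f ` T \<subseteq> T" and "x0 \<in> S"
    and step: "\<And>x. x \<in> S \<Longrightarrow> f x \<in> S \<union> T"
    and gain: "\<And>x. x \<in> S \<Longrightarrow> \<phi> x + e \<le> \<phi> (f x)"
    and bounded: "\<And>x. x \<in> S \<Longrightarrow> \<phi> x \<le> M" and "0 < e"
  shows "\<exists>n0. \<forall>n>n0. (f ^^ n) x0 \<in> T"
proof -
  have "\<exists>m. (f ^^ m) x0 \<in> T"
  proof (rule ccontr)
    assume never: "\<nexists>m. (f ^^ m) x0 \<in> T"
    have orbit: "(f ^^ n) x0 \<in> S \<and> \<phi> x0 + real n * e \<le> \<phi> ((f ^^ n) x0)" for n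
    proof (induction n)
      case 0
      then show ?case using \<open>x0 \<in> S\<close> by simp
    next
      case (Suc n)
      have "(f ^^ Suc n) x0 \<notin> T" using never by blast
      then have "f ((f ^^ n) x0) \<in> S" using step Suc by auto
      then show ?case using Suc gain[of "(f ^^ n) x0"] by (simp add: algebra_simps)
    qed
    obtain n where "M - \<phi> x0 < real n * e" using ex_less_of_nat_mult[OF \<open>0 < e\<close>] by blast
    then show False using orbit[of n] bounded[of "(f ^^ n) x0"] by linarith
  qed
  then obtain m where m: "(f ^^ m) x0 \<in> T" by blast
  have "(f ^^ (k + m)) x0 \<in> T" for k
    by (induction k) (use m invariant in auto)
  then show ?thesis by (metis le_add_diff_inverse2 less_imp_le)
qed

lemma qso_orbit_tendsto_0:
  assumes branch: "\<And>x. 0 \<le> x \<Longrightarrow> x \<le> x0 \<Longrightarrow> \<exists>p. 0 \<le> p \<and> p \<le> q \<and> f x = qso p x"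
    and "q < 1/2" "0 \<le> x0" "x0 < 1"
  shows "(\<lambda>n. (f ^^ n) x0) \<longlonglongrightarrow> 0"
proof (rule orbit_tendsto_0_if_contracting[where r = "1 - (1 - 2*q) * (1 - x0)"])
  have "0 \<le> q" using branch[OF \<open>0 \<le> x0\<close> order_refl] by auto
  then show "0 \<le> 1 - (1 - 2*q) * (1 - x0)" "1 - (1 - 2*q) * (1 - x0) < 1"
    using assms by (auto intro: mult_le_one)
  fix x assume x: "0 \<le> x" "x \<le> x0"
  then obtain p where p: "0 \<le> p" "p \<le> q" "f x = qso p x" using branch by blast
  have "qso p x \<le> x - (1 - 2*q) * x * (1 - x0)"
    using p x assms by (intro qso_le_decrement) auto
  moreover have "0 \<le> qso p x" using p x assms by (intro qso_nonneg) auto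
  ultimately show "0 \<le> f x \<and> f x \<le> (1 - (1 - 2*q) * (1 - x0)) * x"
    using p by (simp add: algebra_simps)
qed (use assms in auto)

lemma qso_orbit_tendsto_1:
  assumes branch: "\<And>x. x0 \<le> x \<Longrightarrow> x \<le> 1 \<Longrightarrow> \<exists>p. q \<le> p \<and> p \<le> 1 \<and> f x = qso p x"
    and "1/2 < q" "0 < x0" "x0 \<le> 1"
  shows "(\<lambda>n. (f ^^ n) x0) \<longlonglongrightarrow> 1"
proof -
  have "(\<lambda>n. ((\<lambda>y. 1 - f (1 - y)) ^^ n) (1 - x0)) \<longlonglongrightarrow> 0"
  proof (rule qso_orbit_tendsto_0[where q = "1 - q"])
    fix y assume "0 \<le> y" "y \<le> 1 - x0"
    then obtain p where "q \<le> p" "p \<le> 1" "f (1 - y) = qso p (1 - y)"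
      using branch[of "1 - y"] by auto
    then show "\<exists>p'. 0 \<le> p' \<and> p' \<le> 1 - q \<and> 1 - f (1 - y) = qso p' y"
      by (intro exI[of _ "1 - p"]) (simp add: one_minus_qso)
  qed (use assms in auto)
  then have "(\<lambda>n. 1 - (1 - (f ^^ n) x0)) \<longlonglongrightarrow> 1 - 0"
    unfolding funpow_reflect by (intro tendsto_diff tendsto_const) simp
  then show ?thesis by simp
qed

lemma qso_orbit_enters_from_below:
  assumes invariant: "f ` {l..u} \<subseteq> {l..u}"
    and "0 < x0" "x0 < l" "l < 1" "1/2 < q"
    and branch: "\<And>x. x0 \<le> x \<Longrightarrow> x < l \<Longrightarrow> \<exists>p\<ge>q. f x = qso p x"
    and below: "\<And>x. x0 \<le> x \<Longrightarrow> x < l \<Longrightarrow> f x \<le> u"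
  shows "\<exists>n0. \<forall>n>n0. (f ^^ n) x0 \<in> {l..u}"
proof (rule orbit_enters_invariant_set[OF invariant,
      where S = "{x0..<l}" and \<phi> = id and e = "(2*q - 1) * x0 * (1 - l)" and M = l])
  fix x assume x: "x \<in> {x0..<l}"
  then obtain p where "q \<le> p" "f x = qso p x" using branch by auto
  then have gain: "x + (2*q - 1) * x0 * (1 - l) \<le> f x"
    using x assms by (auto intro: qso_ge_increment)
  then show "id x + (2*q - 1) * x0 * (1 - l) \<le> id (f x)" by simp
  have "0 < (2*q - 1) * x0 * (1 - l)" using assms by simp
  then show "f x \<in> {x0..<l} \<union> {l..u}" using gain x below by auto
  show "id x \<le> l" using x by simp
qed (use assms in auto)

lemma qso_orbit_enters_from_above:
  assumes invariant: "f ` {l..u} \<subseteq> {l..u}"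
    and "0 < u" "u < x0" "x0 < 1" "q < 1/2"
    and branch: "\<And>x. u < x \<Longrightarrow> x \<le> x0 \<Longrightarrow> \<exists>p\<le>q. f x = qso p x"
    and above: "\<And>x. u < x \<Longrightarrow> x \<le> x0 \<Longrightarrow> l \<le> f x"
  shows "\<exists>n0. \<forall>n>n0. (f ^^ n) x0 \<in> {l..u}"
proof (rule orbit_enters_invariant_set[OF invariant,
      where S = "{u<..x0}" and \<phi> = uminus and e = "(1 - 2*q) * u * (1 - x0)" and M = "-u"])
  fix x assume x: "x \<in> {u<..x0}"
  then obtain p where "p \<le> q" "f x = qso p x" using branch by auto
  then have gain: "f x \<le> x - (1 - 2*q) * u * (1 - x0)"
    using x assms by (auto intro: qso_le_decrement)
  then show "- x + (1 - 2*q) * u * (1 - x0) \<le> - f x" by simp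
  have "0 < (1 - 2*q) * u * (1 - x0)" using assms by simp
  then show "f x \<in> {u<..x0} \<union> {l..u}" using gain x above by auto
  show "- x \<le> - u" using x by simp
qed (use assms in auto)

lemma qso_switch_invariant_interval:
  assumes "1/2 \<le> p" "p \<le> 1" "0 \<le> q" "q \<le> 1/2" "0 \<le> t" "t \<le> 1"
    and branches: "\<And>x. qso q t \<le> x \<Longrightarrow> x \<le> qso p t \<Longrightarrow>
      (x \<le> t \<and> f x = qso p x) \<or> (t \<le> x \<and> f x = qso q x)"
  shows "f ` {qso q t..qso p t} \<subseteq> {qso q t..qso p t}"
proof
  fix y assume "y \<in> f ` {qso q t..qso p t}"
  then obtain x where x: "qso q t \<le> x" "x \<le> qso p t" and y: "y = f x" by auto
  have "0 \<le> x" "x \<le> 1"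
    using x qso_nonneg[of q t] qso_le_one[of p t] assms by linarith+
  with branches[OF x] show "y \<in> {qso q t..qso p t}"
  proof (elim disjE conjE)
    assume "x \<le> t" "f x = qso p x"
    moreover have "x \<le> qso p x" using \<open>0 \<le> x\<close> \<open>x \<le> 1\<close> assms by (intro qso_ge_self)
    moreover have "qso p x \<le> qso p t" using \<open>0 \<le> x\<close> \<open>x \<le> t\<close> assms by (intro qso_mono) auto
    ultimately show ?thesis using x y by auto
  next
    assume "t \<le> x" "f x = qso q x"
    moreover have "qso q x \<le> x" using \<open>0 \<le> x\<close> \<open>x \<le> 1\<close> assms by (intro qso_le_self)
    moreover have "qso q t \<le> qso q x" using \<open>x \<le> 1\<close> \<open>t \<le> x\<close> assms by (intro qso_mono) auto
    ultimately show ?thesis using x y by auto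
  qed
qed

lemma fabc_eq_qso: "fabc a b c x = qso (if x \<le> 1/3 then a else if x < 2/3 then b else c) x"
  unfolding fabc_def qso_def by simp

lemma fabc_first_third: "x \<le> 1/3 \<Longrightarrow> fabc a b c x = qso a x"
  unfolding fabc_def qso_def by simp

lemma fabc_middle_third: "1/3 < x \<Longrightarrow> x < 2/3 \<Longrightarrow> fabc a b c x = qso b x"
  unfolding fabc_def qso_def by simp

lemma fabc_last_third: "2/3 \<le> x \<Longrightarrow> fabc a b c x = qso c x"
  unfolding fabc_def qso_def by simp

lemma fabc_fixed_points:
  assumes "a \<noteq> 1/2" "b \<noteq> 1/2" "c \<noteq> 1/2"
  shows "{x \<in> {0..1}. fabc a b c x = x} = {0, 1}"
proof -
  have "fabc a b c x = x \<longleftrightarrow> x = 0 \<or> x = 1" for x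
    using assms unfolding fabc_eq_qso qso_eq by auto
  then show ?thesis by auto
qed

lemma fabc_orbit_tendsto_0_first_third:
  assumes "0 \<le> a" "a < 1/2" "x0 \<in> {0..1/3}"
  shows "(\<lambda>n. (fabc a b c ^^ n) x0) \<longlonglongrightarrow> 0"
  by (rule qso_orbit_tendsto_0[where q = a]) (use assms in \<open>auto simp: fabc_first_third\<close>)

lemma fabc_orbit_tendsto_0_below_two_thirds:
  assumes "0 \<le> a" "0 \<le> b" "a < 1/2" "b < 1/2" "x0 \<in> {0..<2/3}"
  shows "(\<lambda>n. (fabc a b c ^^ n) x0) \<longlonglongrightarrow> 0"
proof (rule qso_orbit_tendsto_0[where q = "max a b"])
  fix x assume "0 \<le> x" "x \<le> x0"
  then show "\<exists>p. 0 \<le> p \<and> p \<le> max a b \<and> fabc a b c x = qso p x"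
    using assms by (intro exI[of _ "if x \<le> 1/3 then a else b"]) (auto simp: fabc_eq_qso)
qed (use assms in auto)

lemma fabc_orbit_tendsto_0:
  assumes "0 \<le> a" "0 \<le> b" "0 \<le> c" "a < 1/2" "b < 1/2" "c < 1/2" "x0 \<in> {0..<1}"
  shows "(\<lambda>n. (fabc a b c ^^ n) x0) \<longlonglongrightarrow> 0"
proof (rule qso_orbit_tendsto_0[where q = "max a (max b c)"])
  fix x
  show "\<exists>p. 0 \<le> p \<and> p \<le> max a (max b c) \<and> fabc a b c x = qso p x"
    using assms by (intro exI[of _ "if x \<le> 1/3 then a else if x < 2/3 then b else c"])
      (auto simp: fabc_eq_qso)
qed (use assms in auto)

lemma fabc_orbit_tendsto_1_last_third:
  assumes "1/2 < c" "c \<le> 1" "x0 \<in> {2/3..1}"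
  shows "(\<lambda>n. (fabc a b c ^^ n) x0) \<longlonglongrightarrow> 1"
  by (rule qso_orbit_tendsto_1[where q = c]) (use assms in \<open>auto simp: fabc_last_third\<close>)

lemma fabc_orbit_tendsto_1_above_one_third:
  assumes "1/2 < b" "b \<le> 1" "1/2 < c" "c \<le> 1" "x0 \<in> {1/3<..1}"
  shows "(\<lambda>n. (fabc a b c ^^ n) x0) \<longlonglongrightarrow> 1"
proof (rule qso_orbit_tendsto_1[where q = "min b c"])
  fix x assume "x0 \<le> x"
  then show "\<exists>p. min b c \<le> p \<and> p \<le> 1 \<and> fabc a b c x = qso p x"
    using assms by (intro exI[of _ "if x < 2/3 then b else c"]) (auto simp: fabc_eq_qso)
qed (use assms in auto)

lemma fabc_orbit_tendsto_1:
  assumes "1/2 < a" "a \<le> 1" "1/2 < b" "b \<le> 1" "1/2 < c" "c \<le> 1" "x0 \<in> {0<..1}"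
  shows "(\<lambda>n. (fabc a b c ^^ n) x0) \<longlonglongrightarrow> 1"
proof (rule qso_orbit_tendsto_1[where q = "min a (min b c)"])
  fix x
  show "\<exists>p. min a (min b c) \<le> p \<and> p \<le> 1 \<and> fabc a b c x = qso p x"
    using assms by (intro exI[of _ "if x \<le> 1/3 then a else if x < 2/3 then b else c"])
      (auto simp: fabc_eq_qso)
qed (use assms in auto)

lemma fabc_invariant_interval_two_thirds:
  assumes "1/2 < b" "b \<le> 1" "0 \<le> c" "c < 1/2"
  shows "fabc a b c ` {4/9*(1+c)..4/9*(1+b)} \<subseteq> {4/9*(1+c)..4/9*(1+b)}"
proof -
  have "(x \<le> 2/3 \<and> fabc a b c x = qso b x) \<or> (2/3 \<le> x \<and> fabc a b c x = qso c x)"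
    if "4/9*(1+c) \<le> x" for x
    using that assms by (cases "x < 2/3") (auto simp: fabc_middle_third fabc_last_third)
  then show ?thesis
    using qso_switch_invariant_interval[of b c "2/3" "fabc a b c"] assms by simp
qed

lemma fabc_invariant_interval_one_third:
  assumes "1/2 < a" "a \<le> 1" "0 \<le> b" "b < 1/2"
  shows "fabc a b c ` {1/9*(1+4*b)..1/9*(1+4*a)} \<subseteq> {1/9*(1+4*b)..1/9*(1+4*a)}"
proof -
  have "(x \<le> 1/3 \<and> fabc a b c x = qso a x) \<or> (1/3 \<le> x \<and> fabc a b c x = qso b x)"
    if "x \<le> 1/9*(1+4*a)" for x
    using that assms by (cases "x \<le> 1/3") (auto simp: fabc_first_third fabc_middle_third)
  then show ?thesis
    using qso_switch_invariant_interval[of a b "1/3" "fabc a b c"] assms by simp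
qed

lemma fabc_orbit_enters_interval_two_thirds:
  assumes "1/2 < b" "b \<le> 1" "0 \<le> c" "c < 1/2"
    and "x0 \<in> {1/3<..<4/9*(1+c)} \<union> {4/9*(1+b)<..<1}"
  shows "\<exists>n0. \<forall>n>n0. (fabc a b c ^^ n) x0 \<in> {4/9*(1+c)..4/9*(1+b)}"
  using assms(5)
proof
  assume x0: "x0 \<in> {1/3<..<4/9*(1+c)}"
  show ?thesis
  proof (rule qso_orbit_enters_from_below[OF fabc_invariant_interval_two_thirds, where q = b])
    fix x assume x: "x0 \<le> x" "x < 4/9*(1+c)"
    then have fx: "fabc a b c x = qso b x" using x0 assms by (simp add: fabc_middle_third)
    then show "\<exists>p\<ge>b. fabc a b c x = qso p x" by auto
    have "qso b x \<le> qso b (2/3)" using x x0 assms by (intro qso_mono) auto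
    then show "fabc a b c x \<le> 4/9*(1+b)" using fx by simp
  qed (use x0 assms in auto)
next
  assume x0: "x0 \<in> {4/9*(1+b)<..<1}"
  show ?thesis
  proof (rule qso_orbit_enters_from_above[OF fabc_invariant_interval_two_thirds, where q = c])
    fix x assume x: "4/9*(1+b) < x" "x \<le> x0"
    then have fx: "fabc a b c x = qso c x" using x0 assms by (simp add: fabc_last_third)
    then show "\<exists>p\<le>c. fabc a b c x = qso p x" by auto
    have "qso c (2/3) \<le> qso c x" using x x0 assms by (intro qso_mono) auto
    then show "4/9*(1+c) \<le> fabc a b c x" using fx by simp
  qed (use x0 assms in auto)
qed

text \<open>The last hypothesis makes every branch met on the way down from above contracting.\<close>

lemma fabc_orbit_enters_interval_one_third:
  assumes "1/2 < a" "a \<le> 1" "0 \<le> b" "b < 1/2" "0 \<le> c"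
    and "x0 \<in> {0<..<1/9*(1+4*b)} \<union> {1/9*(1+4*a)<..<1}" and "x0 < 2/3 \<or> c < 1/2"
  shows "\<exists>n0. \<forall>n>n0. (fabc a b c ^^ n) x0 \<in> {1/9*(1+4*b)..1/9*(1+4*a)}"
  using assms(6)
proof
  assume x0: "x0 \<in> {0<..<1/9*(1+4*b)}"
  show ?thesis
  proof (rule qso_orbit_enters_from_below[OF fabc_invariant_interval_one_third, where q = a])
    fix x assume x: "x0 \<le> x" "x < 1/9*(1+4*b)"
    then have fx: "fabc a b c x = qso a x" using x0 assms by (simp add: fabc_first_third)
    then show "\<exists>p\<ge>a. fabc a b c x = qso p x" by auto
    have "qso a x \<le> qso a (1/3)" using x x0 assms by (intro qso_mono) auto
    then show "fabc a b c x \<le> 1/9*(1+4*a)" using fx by simp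
  qed (use x0 assms in auto)
next
  assume x0: "x0 \<in> {1/9*(1+4*a)<..<1}"
  define q where "q = (if c < 1/2 then max b c else b)"
  show ?thesis
  proof (rule qso_orbit_enters_from_above[OF fabc_invariant_interval_one_third, where q = q])
    fix x assume x: "1/9*(1+4*a) < x" "x \<le> x0"
    have "\<exists>p\<le>q. fabc a b c x = qso p x \<and> 1/9*(1+4*b) \<le> fabc a b c x"
    proof (cases "x < 2/3")
      case True
      then have fx: "fabc a b c x = qso b x" using x assms by (simp add: fabc_middle_third)
      have "qso b (1/3) \<le> qso b x" using x assms by (intro qso_mono) auto
      then show ?thesis using fx q_def by (intro exI[of _ b]) auto
    next
      case False
      then have fx: "fabc a b c x = qso c x" and "c < 1/2"
        using x assms by (auto simp: fabc_last_third)
      have "qso c (2/3) \<le> qso c x" using False x x0 \<open>c < 1/2\<close> assms by (intro qso_mono) auto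
      then show ?thesis using fx q_def \<open>c < 1/2\<close> assms by (intro exI[of _ c]) auto
    qed
    then show "\<exists>p\<le>q. fabc a b c x = qso p x" "1/9*(1+4*b) \<le> fabc a b c x" by auto
  qed (use x0 assms q_def in auto)
qed

theorem theorem2p8:
  fixes a b c :: real
  assumes a01: "0 \<le> a" "a \<le> 1" and b01: "0 \<le> b" "b \<le> 1" and c01: "0 \<le> c" "c \<le> 1"
    and ne: "a \<noteq> 1/2" "b \<noteq> 1/2" "c \<noteq> 1/2"
  defines "f \<equiv> fabc a b c"
  shows
   "{x \<in> {0..1}. f x = x} = {0, 1}
    \<and> (a < 1/2 \<and> b < 1/2 \<and> c < 1/2 \<longrightarrow>
         (\<forall>x0 \<in> {0..<1}. (\<lambda>n. (f ^^ n) x0) \<longlonglongrightarrow> 0))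
    \<and> (a < 1/2 \<and> b < 1/2 \<and> c > 1/2 \<longrightarrow>
         (\<forall>x0 \<in> {0..<2/3}. (\<lambda>n. (f ^^ n) x0) \<longlonglongrightarrow> 0)
       \<and> (\<forall>x0 \<in> {2/3..1}. (\<lambda>n. (f ^^ n) x0) \<longlonglongrightarrow> 1))
    \<and> (a < 1/2 \<and> b > 1/2 \<and> c < 1/2 \<longrightarrow>
         (\<forall>x0 \<in> {0..1/3}. (\<lambda>n. (f ^^ n) x0) \<longlonglongrightarrow> 0))
    \<and> (a < 1/2 \<and> b > 1/2 \<and> c < 1/2 \<longrightarrow>
         (let A1 = {0..1/3::real};
              A2 = {1/3<..<4/9*(1+c)} \<union> {4/9*(1+b)<..<1};
              A3 = {4/9*(1+c)..4/9*(1+b)}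
          in (\<forall>x0 \<in> A1. (\<lambda>n. (f ^^ n) x0) \<longlonglongrightarrow> 0)
           \<and> (\<forall>x0 \<in> A2. \<exists>n0::nat. \<forall>n > n0. (f ^^ n) x0 \<in> A3)
           \<and> f ` A3 \<subseteq> A3))
    \<and> (a < 1/2 \<and> b > 1/2 \<and> c > 1/2 \<longrightarrow>
         (\<forall>x0 \<in> {0..1/3}. (\<lambda>n. (f ^^ n) x0) \<longlonglongrightarrow> 0)
       \<and> (\<forall>x0 \<in> {1/3<..1}. (\<lambda>n. (f ^^ n) x0) \<longlonglongrightarrow> 1))
    \<and> (a > 1/2 \<and> b < 1/2 \<and> c < 1/2 \<longrightarrow>
         (let B1 = {0<..<1/9*(1+4*b)} \<union> {1/9*(1+4*a)<..<1::real};
              B2 = {1/9*(1+4*b)..1/9*(1+4*a)}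
          in (\<forall>x0 \<in> B1. \<exists>n0::nat. \<forall>n > n0. (f ^^ n) x0 \<in> B2)
           \<and> f ` B2 \<subseteq> B2))
    \<and> (a > 1/2 \<and> b < 1/2 \<and> c > 1/2 \<longrightarrow>
         (let C1 = {0<..<1/9*(1+4*b)} \<union> {1/9*(1+4*a)<..<2/3::real};
              C2 = {1/9*(1+4*b)..1/9*(1+4*a)};
              C3 = {2/3..1::real}
          in (\<forall>x0 \<in> C1. \<exists>n0::nat. \<forall>n > n0. (f ^^ n) x0 \<in> C2)
           \<and> f ` C2 \<subseteq> C2
           \<and> (\<forall>x0 \<in> C3. (\<lambda>n. (f ^^ n) x0) \<longlonglongrightarrow> 1)))
    \<and> (a > 1/2 \<and> b > 1/2 \<and> c > 1/2 \<longrightarrow>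
         (\<forall>x0 \<in> {0<..1}. (\<lambda>n. (f ^^ n) x0) \<longlonglongrightarrow> 1))"
  unfolding f_def Let_def
  apply (intro conjI impI ballI)
  subgoal by (rule fabc_fixed_points[OF ne])
  subgoal by (rule fabc_orbit_tendsto_0) (use a01 b01 c01 in auto)
  subgoal by (rule fabc_orbit_tendsto_0_below_two_thirds) (use a01 b01 in auto)
  subgoal by (rule fabc_orbit_tendsto_1_last_third) (use c01 in auto)
  subgoal by (rule fabc_orbit_tendsto_0_first_third) (use a01 in auto)
  subgoal by (rule fabc_orbit_tendsto_0_first_third) (use a01 in auto)
  subgoal by (rule fabc_orbit_enters_interval_two_thirds) (use b01 c01 in auto)
  subgoal by (rule fabc_invariant_interval_two_thirds) (use b01 c01 in auto)
  subgoal by (rule fabc_orbit_tendsto_0_first_third) (use a01 in auto)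
  subgoal by (rule fabc_orbit_tendsto_1_above_one_third) (use b01 c01 in auto)
  subgoal by (rule fabc_orbit_enters_interval_one_third) (use a01 b01 c01 in auto)
  subgoal by (rule fabc_invariant_interval_one_third) (use a01 b01 in auto)
  subgoal by (rule fabc_orbit_enters_interval_one_third) (use a01 b01 c01 in auto)
  subgoal by (rule fabc_invariant_interval_one_third) (use a01 b01 in auto)
  subgoal by (rule fabc_orbit_tendsto_1_last_third) (use c01 in auto)
  subgoal by (rule fabc_orbit_tendsto_1) (use a01 b01 c01 in auto)
  done

end
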